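(* Let $M_0>0$, $\varphi\in\mathrm{Lip}_\alpha$, $\tau_0\in C_+(\Omega)$ with $\|\varphi\|_{\mathrm{Lip}_\alpha}+\|\tau_0\|_\infty\le M_0$, and let $r\in(0,+\infty)$. Then system (1.1) with initial distribution $(\varphi,\tau_0)$ admits at most one solution $(A,\tau)\in C((-\infty,r],C(\Omega))\times C([0,r],C(\Omega))$ on $[0,r]$.
   Context: $\Omega\subset\mathbb R^n$ compact, $C(\Omega)$ with sup norm, $C_+(\Omega)$ nonnegative functions, $\alpha\ge0$ fixed. Standing assumption: $F:C(\Omega)\times C(\Omega)\times C(\Omega^2)\to C(\Omega)$ is Lipschitz on bounded sets (for every $M>0$ there is $L(M)$ with $\|F(u,v,w)-F(\hat u,\hat v,\hat w)\|_\infty\le L(M)[\|u-\hat u\|_\infty+\|v-\hat v\|_\infty+\|w-\hat w\|_\infty]$ when all arguments have norm $\le M$); $f:C(\Omega)\to C(\Omega)$ is Lipschitz, $0<f(\phi)(x)\le M_f$ for a constant $M_f$, and non-increasing for the pointwise order. $\mathrm{Lip}_\alpha$: $\phi\in C((-\infty,0],C(\Omega))$ with $\theta\mapsto e^{-\alpha|\theta|}\phi(\theta)$ bounded and Lipschitz, norm = sup norm + Lipschitz seminorm of that map. A solution of (1.1) on $[0,r]$ with initial distribution $(\varphi,\tau_0)$: continuous $A:(-\infty,r]\to C(\Omega)$, $\tau:[0,r]\to C_+(\Omega)$ with $A=\varphi$ on $(-\infty,0]$, $A(t,x)=\varphi(0,x)+\int_0^tF(A(l,\cdot),\tau(l,\cdot),A(l-\tau(l)))(x)dl$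 for $t\in[0,r]$, where $A(l-\tau(l))\in C(\Omega^2)$ is $(x,y)\mapsto A(l-\tau(l,x),y)$, and $\int_{t-\tau(t,x)}^tf(A(s,\cdot))(x)ds=\int_{-\tau_0(x)}^0f(\varphi(s,\cdot))(x)ds$ for $t\in[0,r]$, $x\in\Omega$. *)

theory Defs
  imports "HOL-Analysis.Analysis"
begin

text \<open>Sup norm over a set S (0 for the empty set). Elements of C(S) are represented
  by functions that are continuous on S; only their values on S matter.\<close>
definition supn :: "'b set \<Rightarrow> ('b \<Rightarrow> real) \<Rightarrow> real" where
  "supn S u = Sup (insert 0 ((\<lambda>x. \<bar>u x\<bar>) ` S))"

definition CF :: "'b::topological_space set \<Rightarrow> ('b \<Rightarrow> real) set" where
  "CF S = {u. continuous_on S u}"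

definition cont_into :: "real set \<Rightarrow> 'b::topological_space set \<Rightarrow> (real \<Rightarrow> 'b \<Rightarrow> real) \<Rightarrow> bool" where
  "cont_into I S A \<longleftrightarrow> (\<forall>t\<in>I. continuous_on S (A t)) \<and>
     (\<forall>t\<in>I. \<forall>e>0. \<exists>d>0. \<forall>s\<in>I. \<bar>s - t\<bar> < d \<longrightarrow> supn S (\<lambda>x. A s x - A t x) < e)"

definition standing_F ::
  "'b::topological_space set \<Rightarrow> (('b \<Rightarrow> real) \<Rightarrow> ('b \<Rightarrow> real) \<Rightarrow> ('b \<times> 'b \<Rightarrow> real) \<Rightarrow> ('b \<Rightarrow> real)) \<Rightarrow> bool" where
  "standing_F \<Omega> F \<longleftrightarrow>
     (\<forall>u\<in>CF \<Omega>. \<forall>v\<in>CF \<Omega>. \<forall>w\<in>CF (\<Omega> \<times> \<Omega>). continuous_on \<Omega> (F u v w)) \<and>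
     (\<forall>M>0. \<exists>L. \<forall>u\<in>CF \<Omega>. \<forall>v\<in>CF \<Omega>. \<forall>w\<in>CF (\<Omega> \<times> \<Omega>).
        \<forall>u'\<in>CF \<Omega>. \<forall>v'\<in>CF \<Omega>. \<forall>w'\<in>CF (\<Omega> \<times> \<Omega>).
        supn \<Omega> u \<le> M \<longrightarrow> supn \<Omega> v \<le> M \<longrightarrow> supn (\<Omega> \<times> \<Omega>) w \<le> M \<longrightarrow>
        supn \<Omega> u' \<le> M \<longrightarrow> supn \<Omega> v' \<le> M \<longrightarrow> supn (\<Omega> \<times> \<Omega>) w' \<le> M \<longrightarrow>
        supn \<Omega> (\<lambda>x. F u v w x - F u' v' w' x)
          \<le> L * (supn \<Omega> (\<lambda>x. u x - u' x) + supn \<Omega> (\<lambda>x. v x - v' x)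
                 + supn (\<Omega> \<times> \<Omega>) (\<lambda>p. w p - w' p)))"

definition standing_f :: "'b::topological_space set \<Rightarrow> (('b \<Rightarrow> real) \<Rightarrow> ('b \<Rightarrow> real)) \<Rightarrow> bool" where
  "standing_f \<Omega> f \<longleftrightarrow>
     (\<forall>u\<in>CF \<Omega>. continuous_on \<Omega> (f u)) \<and>
     (\<exists>L. \<forall>u\<in>CF \<Omega>. \<forall>u'\<in>CF \<Omega>.
        supn \<Omega> (\<lambda>x. f u x - f u' x) \<le> L * supn \<Omega> (\<lambda>x. u x - u' x)) \<and>
     (\<exists>Mf. \<forall>u\<in>CF \<Omega>. \<forall>x\<in>\<Omega>. 0 < f u x \<and> f u x \<le> Mf) \<and>
     (\<forall>u\<in>CF \<Omega>. \<forall>v\<in>CF \<Omega>. (\<forall>x\<in>\<Omega>. u x \<le> v x) \<longrightarrow> (\<forall>x\<in>\<Omega>. f v x \<le> f u x))"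

definition in_Lip_alpha :: "real \<Rightarrow> 'b::topological_space set \<Rightarrow> (real \<Rightarrow> 'b \<Rightarrow> real) \<Rightarrow> bool" where
  "in_Lip_alpha \<alpha> \<Omega> \<phi> \<longleftrightarrow>
     (\<forall>\<theta>\<le>0. continuous_on \<Omega> (\<phi> \<theta>)) \<and>
     (\<exists>B. \<forall>\<theta>\<le>0. supn \<Omega> (\<lambda>x. exp (- \<alpha> * \<bar>\<theta>\<bar>) * \<phi> \<theta> x) \<le> B) \<and>
     (\<exists>K. \<forall>\<theta>\<le>0. \<forall>\<theta>'\<le>0.
        supn \<Omega> (\<lambda>x. exp (- \<alpha> * \<bar>\<theta>\<bar>) * \<phi> \<theta> x - exp (- \<alpha> * \<bar>\<theta>'\<bar>) * \<phi> \<theta>' x)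
          \<le> K * \<bar>\<theta> - \<theta>'\<bar>)"

definition Lip_alpha_norm :: "real \<Rightarrow> 'b set \<Rightarrow> (real \<Rightarrow> 'b \<Rightarrow> real) \<Rightarrow> real" where
  "Lip_alpha_norm \<alpha> \<Omega> \<phi> =
     (SUP \<theta>\<in>{..0}. supn \<Omega> (\<lambda>x. exp (- \<alpha> * \<bar>\<theta>\<bar>) * \<phi> \<theta> x)) +
     (SUP p\<in>{(\<theta>, \<theta>'). \<theta> \<le> 0 \<and> \<theta>' \<le> 0 \<and> \<theta> \<noteq> \<theta>'}.
        supn \<Omega> (\<lambda>x. exp (- \<alpha> * \<bar>fst p\<bar>) * \<phi> (fst p) x - exp (- \<alpha> * \<bar>snd p\<bar>) * \<phi> (snd p) x)
          / \<bar>fst p - snd p\<bar>)"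

definition is_solution ::
  "'b::topological_space set \<Rightarrow> (('b \<Rightarrow> real) \<Rightarrow> ('b \<Rightarrow> real) \<Rightarrow> ('b \<times> 'b \<Rightarrow> real) \<Rightarrow> ('b \<Rightarrow> real))
   \<Rightarrow> (('b \<Rightarrow> real) \<Rightarrow> ('b \<Rightarrow> real)) \<Rightarrow> (real \<Rightarrow> 'b \<Rightarrow> real) \<Rightarrow> ('b \<Rightarrow> real) \<Rightarrow> real
   \<Rightarrow> (real \<Rightarrow> 'b \<Rightarrow> real) \<Rightarrow> (real \<Rightarrow> 'b \<Rightarrow> real) \<Rightarrow> bool" where
  "is_solution \<Omega> F f \<phi> \<tau>0 r A \<tau> \<longleftrightarrow>
     cont_into {..r} \<Omega> A \<and> cont_into {0..r} \<Omega> \<tau> \<and>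
     (\<forall>t\<in>{0..r}. \<forall>x\<in>\<Omega>. 0 \<le> \<tau> t x) \<and>
     (\<forall>t\<le>0. \<forall>x\<in>\<Omega>. A t x = \<phi> t x) \<and>
     (\<forall>t\<in>{0..r}. \<forall>x\<in>\<Omega>.
        ((\<lambda>l. F (A l) (\<tau> l) (\<lambda>(z, y). A (l - \<tau> l z) y) x) has_integral (A t x - \<phi> 0 x)) {0..t}) \<and>
     (\<forall>t\<in>{0..r}. \<forall>x\<in>\<Omega>.
        integral {t - \<tau> t x..t} (\<lambda>s. f (A s) x) = integral {- \<tau>0 x..0} (\<lambda>s. f (\<phi> s) x))"

end

theory Submission
  imports Defs
begin

text \<open>Suppose A1 and A2 differ by at most E up to time l. The threshold condition (the integral
  of f(A(s))(x) over [l - \<tau>(l,x), l] is fixed by the initial data), with f Lipschitz and bounded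
  below by some m > 0 along bounded solutions, gives |\<tau>1 - \<tau>2| \<le> C E at time l. The history
  lies in Lip_\<alpha> and the integrand is bounded, so A1 is Lipschitz in time; hence the delayed
  arguments A_i(l - \<tau>_i(l,z), y) also differ by O(E), and the right-hand sides of the integral
  equations by at most K E. The integral equation therefore contracts on time steps of length
  1/(2K), so agreement spreads from t \<le> 0 to t \<le> r; the delay estimate with E = 0 then gives
  \<tau>1 = \<tau>2.\<close>

abbreviation delayed :: "(real \<Rightarrow> 'b \<Rightarrow> real) \<Rightarrow> (real \<Rightarrow> 'b \<Rightarrow> real) \<Rightarrow> real \<Rightarrow> 'b \<times> 'b \<Rightarrow> real"
  where "delayed A \<tau> l \<equiv> \<lambda>(z, y). A (l - \<tau> l z) y"

lemma bdd_above_supn_set: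
  fixes u :: "'a \<Rightarrow> real"
  assumes "\<And>y. y \<in> S \<Longrightarrow> \<bar>u y\<bar> \<le> c"
  shows "bdd_above (insert 0 ((\<lambda>x. \<bar>u x\<bar>) ` S))"
proof (rule bdd_aboveI[of _ "max 0 c"])
  fix v assume "v \<in> insert 0 ((\<lambda>x. \<bar>u x\<bar>) ` S)"
  then show "v \<le> max 0 c"
    using assms by (auto simp: le_max_iff_disj)
qed

lemma supn_upper:
  assumes "\<And>y. y \<in> S \<Longrightarrow> \<bar>u y\<bar> \<le> c" "x \<in> S"
  shows "\<bar>u x\<bar> \<le> supn S u"
  unfolding supn_def using bdd_above_supn_set[of S u c] assms by (auto intro: cSup_upper)

lemma supn_nonneg:
  assumes "\<And>y. y \<in> S \<Longrightarrow> \<bar>u y\<bar> \<le> c"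
  shows "0 \<le> supn S u"
  unfolding supn_def using bdd_above_supn_set[of S u c] assms by (auto intro: cSup_upper)

lemma supn_le:
  assumes "0 \<le> c" "\<And>x. x \<in> S \<Longrightarrow> \<bar>u x\<bar> \<le> c"
  shows "supn S u \<le> c"
  unfolding supn_def using assms by (intro cSup_least) auto

lemma compact_continuous_abs_bounded:
  fixes u :: "'a::topological_space \<Rightarrow> real"
  assumes "compact S" "continuous_on S u"
  obtains c where "\<And>y. y \<in> S \<Longrightarrow> \<bar>u y\<bar> \<le> c"
proof -
  have "bounded (u ` S)"
    by (rule compact_imp_bounded[OF compact_continuous_image[OF assms(2,1)]])
  then show ?thesis
    using that unfolding bounded_iff by fastforce
qed

lemma abs_le_supn:
  fixes u :: "'a::topological_space \<Rightarrow> real"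
  assumes "compact S" "continuous_on S u" "x \<in> S"
  shows "\<bar>u x\<bar> \<le> supn S u"
proof -
  obtain c where "\<And>y. y \<in> S \<Longrightarrow> \<bar>u y\<bar> \<le> c"
    using compact_continuous_abs_bounded[OF assms(1,2)] by blast
  then show ?thesis
    using assms(3) by (rule supn_upper)
qed

lemma cont_into_CF: "cont_into I \<Omega> A \<Longrightarrow> t \<in> I \<Longrightarrow> A t \<in> CF \<Omega>"
  unfolding cont_into_def CF_def by blast

lemma cont_into_abs_diff_le_supn:
  fixes \<Omega> :: "'b::metric_space set"
  assumes "compact \<Omega>" "cont_into I \<Omega> A" "s \<in> I" "t \<in> I" "y \<in> \<Omega>"
  shows "\<bar>A s y - A t y\<bar> \<le> supn \<Omega> (\<lambda>x. A s x - A t x)"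
proof -
  have "continuous_on \<Omega> (\<lambda>x. A s x - A t x)"
    using cont_into_CF[OF assms(2)] assms(3,4) by (auto simp: CF_def intro: continuous_on_diff)
  from abs_le_supn[OF assms(1) this assms(5)] show ?thesis .
qed

lemma continuous_on_Times_cont_into:
  fixes \<Omega> :: "'b::metric_space set"
  assumes "compact \<Omega>" "cont_into I \<Omega> A"
  shows "continuous_on (I \<times> \<Omega>) (\<lambda>p. A (fst p) (snd p))"
  unfolding continuous_on_iff
proof (intro ballI allI impI)
  fix p :: "real \<times> 'b" and e :: real
  assume p: "p \<in> I \<times> \<Omega>" and e: "0 < e"
  obtain t x where ptx: "p = (t, x)" "t \<in> I" "x \<in> \<Omega>" using p by auto
  obtain d1 where d1: "d1 > 0" "\<And>s. s \<in> I \<Longrightarrow> \<bar>s - t\<bar> < d1 \<Longrightarrow> supn \<Omega> (\<lambda>x. A s x - A t x) < e/2"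
    using assms(2) ptx e unfolding cont_into_def by (meson half_gt_zero)
  have "continuous_on \<Omega> (A t)"
    using cont_into_CF[OF assms(2) ptx(2)] by (simp add: CF_def)
  then obtain d2 where d2: "d2 > 0" "\<And>y. y \<in> \<Omega> \<Longrightarrow> dist y x < d2 \<Longrightarrow> \<bar>A t y - A t x\<bar> < e/2"
    using ptx e unfolding continuous_on_iff dist_real_def by (meson half_gt_zero)
  show "\<exists>d>0. \<forall>q\<in>I \<times> \<Omega>. dist q p < d \<longrightarrow> dist (A (fst q) (snd q)) (A (fst p) (snd p)) < e"
  proof (intro exI[of _ "min d1 d2"] conjI ballI impI)
    fix q assume q: "q \<in> I \<times> \<Omega>" and dq: "dist q p < min d1 d2"
    obtain s y where qsy: "q = (s, y)" "s \<in> I" "y \<in> \<Omega>" using q by auto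
    have "\<bar>s - t\<bar> < d1" "dist y x < d2"
      using dist_fst_le[of q p] dist_snd_le[of q p] dq qsy ptx by (auto simp: dist_real_def)
    then have "\<bar>A s y - A t y\<bar> < e/2" "\<bar>A t y - A t x\<bar> < e/2"
      using cont_into_abs_diff_le_supn[OF assms qsy(2) ptx(2) qsy(3)] d1(2)[OF qsy(2)] d2(2)[OF qsy(3)]
      by auto
    then show "dist (A (fst q) (snd q)) (A (fst p) (snd p)) < e"
      using qsy ptx abs_triangle_ineq[of "A s y - A t y" "A t y - A t x"]
      by (simp add: dist_real_def)
  qed (use d1 d2 in simp)
qed

lemma cont_into_bounded:
  fixes \<Omega> :: "'b::metric_space set"
  assumes "compact \<Omega>" "cont_into I \<Omega> A" "{c..d} \<subseteq> I"
  obtains B where "\<And>s y. s \<in> {c..d} \<Longrightarrow> y \<in> \<Omega> \<Longrightarrow> \<bar>A s y\<bar> \<le> B"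
proof -
  have "continuous_on ({c..d} \<times> \<Omega>) (\<lambda>p. A (fst p) (snd p))"
    by (rule continuous_on_subset[OF continuous_on_Times_cont_into[OF assms(1,2)]])
      (use assms(3) in auto)
  from compact_continuous_abs_bounded[OF compact_Times[OF compact_Icc assms(1)] this]
  show ?thesis
    using that by (metis SigmaI fst_conv snd_conv)
qed

lemma delayed_in_CF:
  fixes \<Omega> :: "'b::metric_space set"
  assumes "compact \<Omega>" "cont_into {..r} \<Omega> A" "cont_into {0..r} \<Omega> \<tau>"
    and "\<And>z. z \<in> \<Omega> \<Longrightarrow> 0 \<le> \<tau> l z" "l \<in> {0..r}"
  shows "delayed A \<tau> l \<in> CF (\<Omega> \<times> \<Omega>)"
proof -
  let ?shift = "\<lambda>p. (l - \<tau> l (fst p), snd p)"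
  have "continuous_on \<Omega> (\<tau> l)"
    using cont_into_CF[OF assms(3,5)] by (simp add: CF_def)
  then have "continuous_on (\<Omega> \<times> \<Omega>) ?shift"
    by (intro continuous_on_Pair continuous_on_diff continuous_on_const continuous_on_snd
        continuous_on_compose2[OF _ continuous_on_fst]) auto
  moreover have "?shift ` (\<Omega> \<times> \<Omega>) \<subseteq> {..r} \<times> \<Omega>"
    using assms(4,5) by force
  ultimately have "continuous_on (\<Omega> \<times> \<Omega>) ((\<lambda>p. A (fst p) (snd p)) \<circ> ?shift)"
    by (rule continuous_on_compose[OF _ continuous_on_subset[OF continuous_on_Times_cont_into[OF assms(1,2)]]])
  moreover have "(\<lambda>p. A (fst p) (snd p)) \<circ> ?shift = delayed A \<tau> l"
    by (auto simp: fun_eq_iff)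
  ultimately show ?thesis
    unfolding CF_def by simp
qed

lemma
  assumes "is_solution \<Omega> F f \<phi> \<tau>0 r A \<tau>"
  shows solution_cont_into: "cont_into {..r} \<Omega> A"
    and solution_delay_cont_into: "cont_into {0..r} \<Omega> \<tau>"
    and solution_delay_nonneg: "\<And>t x. t \<in> {0..r} \<Longrightarrow> x \<in> \<Omega> \<Longrightarrow> 0 \<le> \<tau> t x"
    and solution_history: "\<And>t x. t \<le> 0 \<Longrightarrow> x \<in> \<Omega> \<Longrightarrow> A t x = \<phi> t x"
    and solution_integral_equation: "\<And>t x. t \<in> {0..r} \<Longrightarrow> x \<in> \<Omega> \<Longrightarrow>
      ((\<lambda>l. F (A l) (\<tau> l) (delayed A \<tau> l) x) has_integral (A t x - \<phi> 0 x)) {0..t}"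
    and solution_threshold: "\<And>t x. t \<in> {0..r} \<Longrightarrow> x \<in> \<Omega> \<Longrightarrow>
      integral {t - \<tau> t x..t} (\<lambda>s. f (A s) x) = integral {- \<tau>0 x..0} (\<lambda>s. f (\<phi> s) x)"
  using assms unfolding is_solution_def by auto

lemma solution_args_in_CF:
  fixes \<Omega> :: "'b::metric_space set"
  assumes "compact \<Omega>" "is_solution \<Omega> F f \<phi> \<tau>0 r A \<tau>" "l \<in> {0..r}"
  shows "A l \<in> CF \<Omega>" "\<tau> l \<in> CF \<Omega>" "delayed A \<tau> l \<in> CF (\<Omega> \<times> \<Omega>)"
  using assms solution_delay_nonneg[OF assms(2)]
  by (auto intro!: cont_into_CF[OF solution_cont_into[OF assms(2)]]
      cont_into_CF[OF solution_delay_cont_into[OF assms(2)]]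
      delayed_in_CF[OF assms(1) solution_cont_into[OF assms(2)] solution_delay_cont_into[OF assms(2)]])

lemma
  assumes "standing_f \<Omega> f" "u \<in> CF \<Omega>"
  shows standing_f_continuous_on: "continuous_on \<Omega> (f u)"
    and standing_f_pos: "x \<in> \<Omega> \<Longrightarrow> 0 < f u x"
  using assms unfolding standing_f_def by blast+

lemma standing_f_antimono:
  assumes "standing_f \<Omega> f" "u \<in> CF \<Omega>" "v \<in> CF \<Omega>" "\<And>y. y \<in> \<Omega> \<Longrightarrow> u y \<le> v y" "x \<in> \<Omega>"
  shows "f v x \<le> f u x"
  using assms unfolding standing_f_def by blast

lemma standing_f_lipschitz:
  fixes \<Omega> :: "'b::metric_space set"
  assumes "compact \<Omega>" "standing_f \<Omega> f"
  obtains L where "0 \<le> L"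
    "\<And>u u' a x. u \<in> CF \<Omega> \<Longrightarrow> u' \<in> CF \<Omega> \<Longrightarrow> 0 \<le> a \<Longrightarrow> \<forall>y\<in>\<Omega>. \<bar>u y - u' y\<bar> \<le> a \<Longrightarrow>
       x \<in> \<Omega> \<Longrightarrow> \<bar>f u x - f u' x\<bar> \<le> L * a"
proof -
  obtain L where L: "\<And>u u'. u \<in> CF \<Omega> \<Longrightarrow> u' \<in> CF \<Omega> \<Longrightarrow>
      supn \<Omega> (\<lambda>x. f u x - f u' x) \<le> L * supn \<Omega> (\<lambda>x. u x - u' x)"
    using assms(2) unfolding standing_f_def by blast
  have "\<bar>f u x - f u' x\<bar> \<le> \<bar>L\<bar> * a"
    if u: "u \<in> CF \<Omega>" "u' \<in> CF \<Omega>" and a: "0 \<le> a" "\<forall>y\<in>\<Omega>. \<bar>u y - u' y\<bar> \<le> a" and x: "x \<in> \<Omega>"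
    for u u' a x
  proof -
    have "continuous_on \<Omega> (\<lambda>x. f u x - f u' x)"
      using standing_f_continuous_on[OF assms(2)] u by (intro continuous_on_diff)
    then have "\<bar>f u x - f u' x\<bar> \<le> supn \<Omega> (\<lambda>x. f u x - f u' x)"
      using abs_le_supn[OF assms(1) _ x] by simp
    also have "\<dots> \<le> L * supn \<Omega> (\<lambda>x. u x - u' x)"
      using L u by blast
    also have "\<dots> \<le> \<bar>L\<bar> * supn \<Omega> (\<lambda>x. u x - u' x)"
      using supn_nonneg[of \<Omega> "\<lambda>x. u x - u' x" a] a by (intro mult_right_mono) auto
    also have "\<dots> \<le> \<bar>L\<bar> * a"
      using supn_le[of a \<Omega> "\<lambda>x. u x - u' x"] a by (intro mult_left_mono) auto
    finally show ?thesis .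
  qed
  then show ?thesis
    using that[of "\<bar>L\<bar>"] by simp
qed

lemma standing_F_continuous_on:
  assumes "standing_F \<Omega> F" "u \<in> CF \<Omega>" "v \<in> CF \<Omega>" "w \<in> CF (\<Omega> \<times> \<Omega>)"
  shows "continuous_on \<Omega> (F u v w)"
  using assms unfolding standing_F_def by blast

lemma standing_F_local_lipschitz:
  fixes \<Omega> :: "'b::metric_space set"
  assumes "compact \<Omega>" "standing_F \<Omega> F" "0 < M"
  obtains L where "0 \<le> L"
    "\<And>u v w u' v' w' a b c x.
       u \<in> CF \<Omega> \<Longrightarrow> v \<in> CF \<Omega> \<Longrightarrow> w \<in> CF (\<Omega> \<times> \<Omega>) \<Longrightarrow>
       u' \<in> CF \<Omega> \<Longrightarrow> v' \<in> CF \<Omega> \<Longrightarrow> w' \<in> CF (\<Omega> \<times> \<Omega>) \<Longrightarrow>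
       \<forall>y\<in>\<Omega>. \<bar>u y\<bar> \<le> M \<and> \<bar>v y\<bar> \<le> M \<and> \<bar>u' y\<bar> \<le> M \<and> \<bar>v' y\<bar> \<le> M \<Longrightarrow>
       \<forall>p\<in>\<Omega> \<times> \<Omega>. \<bar>w p\<bar> \<le> M \<and> \<bar>w' p\<bar> \<le> M \<Longrightarrow>
       \<forall>y\<in>\<Omega>. \<bar>u y - u' y\<bar> \<le> a \<and> \<bar>v y - v' y\<bar> \<le> b \<Longrightarrow>
       \<forall>p\<in>\<Omega> \<times> \<Omega>. \<bar>w p - w' p\<bar> \<le> c \<Longrightarrow>
       0 \<le> a \<Longrightarrow> 0 \<le> b \<Longrightarrow> 0 \<le> c \<Longrightarrow> x \<in> \<Omega> \<Longrightarrow>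
       \<bar>F u v w x - F u' v' w' x\<bar> \<le> L * (a + b + c)"
proof -
  obtain L where L: "\<forall>u\<in>CF \<Omega>. \<forall>v\<in>CF \<Omega>. \<forall>w\<in>CF (\<Omega> \<times> \<Omega>).
        \<forall>u'\<in>CF \<Omega>. \<forall>v'\<in>CF \<Omega>. \<forall>w'\<in>CF (\<Omega> \<times> \<Omega>).
        supn \<Omega> u \<le> M \<longrightarrow> supn \<Omega> v \<le> M \<longrightarrow> supn (\<Omega> \<times> \<Omega>) w \<le> M \<longrightarrow>
        supn \<Omega> u' \<le> M \<longrightarrow> supn \<Omega> v' \<le> M \<longrightarrow> supn (\<Omega> \<times> \<Omega>) w' \<le> M \<longrightarrow>
        supn \<Omega> (\<lambda>x. F u v w x - F u' v' w' x)
          \<le> L * (supn \<Omega> (\<lambda>x. u x - u' x) + supn \<Omega> (\<lambda>x. v x - v' x)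
                 + supn (\<Omega> \<times> \<Omega>) (\<lambda>p. w p - w' p))"
    using assms(2,3) unfolding standing_F_def by blast
  have "\<bar>F u v w x - F u' v' w' x\<bar> \<le> \<bar>L\<bar> * (a + b + c)"
    if CF: "u \<in> CF \<Omega>" "v \<in> CF \<Omega>" "w \<in> CF (\<Omega> \<times> \<Omega>)" "u' \<in> CF \<Omega>" "v' \<in> CF \<Omega>" "w' \<in> CF (\<Omega> \<times> \<Omega>)"
      and bdd: "\<forall>y\<in>\<Omega>. \<bar>u y\<bar> \<le> M \<and> \<bar>v y\<bar> \<le> M \<and> \<bar>u' y\<bar> \<le> M \<and> \<bar>v' y\<bar> \<le> M"
        "\<forall>p\<in>\<Omega> \<times> \<Omega>. \<bar>w p\<bar> \<le> M \<and> \<bar>w' p\<bar> \<le> M"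
      and close: "\<forall>y\<in>\<Omega>. \<bar>u y - u' y\<bar> \<le> a \<and> \<bar>v y - v' y\<bar> \<le> b" "\<forall>p\<in>\<Omega> \<times> \<Omega>. \<bar>w p - w' p\<bar> \<le> c"
      and abc: "0 \<le> a" "0 \<le> b" "0 \<le> c" and x: "x \<in> \<Omega>"
    for u v w u' v' w' a b c x
  proof -
    let ?du = "supn \<Omega> (\<lambda>x. u x - u' x)" and ?dv = "supn \<Omega> (\<lambda>x. v x - v' x)"
      and ?dw = "supn (\<Omega> \<times> \<Omega>) (\<lambda>p. w p - w' p)"
    have M: "0 \<le> M" using assms(3) by simp
    have sM: "supn \<Omega> u \<le> M" "supn \<Omega> v \<le> M" "supn (\<Omega> \<times> \<Omega>) w \<le> M"
      "supn \<Omega> u' \<le> M" "supn \<Omega> v' \<le> M" "supn (\<Omega> \<times> \<Omega>) w' \<le> M"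
      using bdd by (auto intro!: supn_le[OF M])
    have "continuous_on \<Omega> (\<lambda>x. F u v w x - F u' v' w' x)"
      using standing_F_continuous_on[OF assms(2)] CF by (intro continuous_on_diff)
    then have "\<bar>F u v w x - F u' v' w' x\<bar> \<le> supn \<Omega> (\<lambda>x. F u v w x - F u' v' w' x)"
      using abs_le_supn[OF assms(1) _ x] by simp
    also have "\<dots> \<le> L * (?du + ?dv + ?dw)"
      using L CF sM by blast
    also have "\<dots> \<le> \<bar>L\<bar> * (?du + ?dv + ?dw)"
      using supn_nonneg[of \<Omega> "\<lambda>x. u x - u' x" a] supn_nonneg[of \<Omega> "\<lambda>x. v x - v' x" b]
        supn_nonneg[of "\<Omega> \<times> \<Omega>" "\<lambda>p. w p - w' p" c] close
      by (intro mult_right_mono) auto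
    also have "\<dots> \<le> \<bar>L\<bar> * (a + b + c)"
      using supn_le[of a \<Omega> "\<lambda>x. u x - u' x"] supn_le[of b \<Omega> "\<lambda>x. v x - v' x"]
        supn_le[of c "\<Omega> \<times> \<Omega>" "\<lambda>p. w p - w' p"] close abc
      by (intro mult_left_mono add_mono) auto
    finally show ?thesis .
  qed
  then show ?thesis
    using that[of "\<bar>L\<bar>"] by simp
qed

lemma compact_continuous_pos_lower_bound:
  fixes g :: "'a::topological_space \<Rightarrow> real"
  assumes "compact S" "continuous_on S g" "\<And>x. x \<in> S \<Longrightarrow> 0 < g x"
  obtains m where "0 < m" "\<And>x. x \<in> S \<Longrightarrow> m \<le> g x"
proof (cases "S = {}")
  case False
  then obtain x0 where "x0 \<in> S" "\<And>x. x \<in> S \<Longrightarrow> g x0 \<le> g x"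
    using continuous_attains_inf[OF assms(1) _ assms(2)] by blast
  then show ?thesis
    using that assms(3) by blast
qed (use that[of 1] in auto)

lemma solutions_bounded:
  fixes \<Omega> :: "'b::metric_space set"
  assumes "compact \<Omega>" "is_solution \<Omega> F f \<phi> \<tau>0 r A1 \<tau>1" "is_solution \<Omega> F f \<phi> \<tau>0 r A2 \<tau>2"
  obtains R M where "0 \<le> R" "R \<le> M" "0 < M"
    "\<And>l z. l \<in> {0..r} \<Longrightarrow> z \<in> \<Omega> \<Longrightarrow> 0 \<le> \<tau>1 l z \<and> \<tau>1 l z \<le> R \<and> 0 \<le> \<tau>2 l z \<and> \<tau>2 l z \<le> R"
    "\<And>s y. s \<in> {-R..r} \<Longrightarrow> y \<in> \<Omega> \<Longrightarrow> \<bar>A1 s y\<bar> \<le> M \<and> \<bar>A2 s y\<bar> \<le> M"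
proof -
  obtain R1 where R1: "\<And>l z. l \<in> {0..r} \<Longrightarrow> z \<in> \<Omega> \<Longrightarrow> \<bar>\<tau>1 l z\<bar> \<le> R1"
    by (rule cont_into_bounded[OF assms(1) solution_delay_cont_into[OF assms(2)], of 0 r]) auto
  obtain R2 where R2: "\<And>l z. l \<in> {0..r} \<Longrightarrow> z \<in> \<Omega> \<Longrightarrow> \<bar>\<tau>2 l z\<bar> \<le> R2"
    by (rule cont_into_bounded[OF assms(1) solution_delay_cont_into[OF assms(3)], of 0 r]) auto
  define R where "R = max 0 (max R1 R2)"
  obtain M1 where M1: "\<And>s y. s \<in> {-R..r} \<Longrightarrow> y \<in> \<Omega> \<Longrightarrow> \<bar>A1 s y\<bar> \<le> M1"
    by (rule cont_into_bounded[OF assms(1) solution_cont_into[OF assms(2)], of "-R" r]) auto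
  obtain M2 where M2: "\<And>s y. s \<in> {-R..r} \<Longrightarrow> y \<in> \<Omega> \<Longrightarrow> \<bar>A2 s y\<bar> \<le> M2"
    by (rule cont_into_bounded[OF assms(1) solution_cont_into[OF assms(3)], of "-R" r]) auto
  show ?thesis
  proof (rule that[of R "max 1 (max R (max M1 M2))"])
    fix l z assume "l \<in> {0..r}" "z \<in> \<Omega>"
    then show "0 \<le> \<tau>1 l z \<and> \<tau>1 l z \<le> R \<and> 0 \<le> \<tau>2 l z \<and> \<tau>2 l z \<le> R"
      using R1 R2 solution_delay_nonneg[OF assms(2)] solution_delay_nonneg[OF assms(3)]
      unfolding R_def by fastforce
  next
    fix s y assume "s \<in> {-R..r}" "y \<in> \<Omega>"
    then show "\<bar>A1 s y\<bar> \<le> max 1 (max R (max M1 M2)) \<and> \<bar>A2 s y\<bar> \<le> max 1 (max R (max M1 M2))"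
      using M1 M2 by fastforce
  qed (auto simp: R_def)
qed

lemma lipschitz_on_mult_bounded:
  fixes g h :: "'a::metric_space \<Rightarrow> real"
  assumes "Lg-lipschitz_on U g" "Lh-lipschitz_on U h"
    and "0 \<le> Bg" "\<And>x. x \<in> U \<Longrightarrow> \<bar>g x\<bar> \<le> Bg"
    and "0 \<le> Bh" "\<And>x. x \<in> U \<Longrightarrow> \<bar>h x\<bar> \<le> Bh"
  shows "(Bg * Lh + Lg * Bh)-lipschitz_on U (\<lambda>x. g x * h x)"
proof (rule lipschitz_onI)
  fix x y assume xy: "x \<in> U" "y \<in> U"
  have "dist (g x * h x) (g y * h y) = \<bar>g x * (h x - h y) + (g x - g y) * h y\<bar>"
    by (simp add: dist_real_def algebra_simps)
  also have "\<dots> \<le> \<bar>g x\<bar> * dist (h x) (h y) + dist (g x) (g y) * \<bar>h y\<bar>"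
    by (metis abs_mult abs_triangle_ineq dist_real_def)
  also have "\<dots> \<le> Bg * (Lh * dist x y) + (Lg * dist x y) * Bh"
    using assms(3-6) xy lipschitz_onD[OF assms(1) xy] lipschitz_onD[OF assms(2) xy]
      lipschitz_on_nonneg[OF assms(1)] lipschitz_on_nonneg[OF assms(2)]
    by (intro add_mono mult_mono) auto
  finally show "dist (g x * h x) (g y * h y) \<le> (Bg * Lh + Lg * Bh) * dist x y"
    by (simp add: algebra_simps)
qed (use assms(3,5) lipschitz_on_nonneg[OF assms(1)] lipschitz_on_nonneg[OF assms(2)] in simp)

lemma exp_lipschitz_on_atMost: "(exp c)-lipschitz_on {..c} exp"
proof (rule lipschitz_on_leI)
  fix x y :: real assume "x \<in> {..c}" "y \<in> {..c}" "x \<le> y"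
  have "exp y - exp x = exp y * (1 - exp (x - y))"
    by (simp add: algebra_simps exp_diff)
  also have "\<dots> \<le> exp y * (y - x)"
    using exp_ge_add_one_self[of "x - y"] by (intro mult_left_mono) (linarith, simp)
  also have "\<dots> \<le> exp c * (y - x)"
    using \<open>y \<in> {..c}\<close> \<open>x \<le> y\<close> by (intro mult_right_mono) auto
  finally show "dist (exp x) (exp y) \<le> exp c * dist x y"
    using \<open>x \<le> y\<close> by (simp add: dist_real_def)
qed simp

lemma Lip_alpha_lipschitz_on:
  fixes \<Omega> :: "'b::metric_space set"
  assumes "compact \<Omega>" "0 \<le> \<alpha>" "in_Lip_alpha \<alpha> \<Omega> \<phi>" "0 \<le> R"
  obtains K where "\<And>y. y \<in> \<Omega> \<Longrightarrow> K-lipschitz_on {-R..0} (\<lambda>\<theta>. \<phi> \<theta> y)"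
proof -
  define \<psi> where "\<psi> \<theta> x = exp (- \<alpha> * \<bar>\<theta>\<bar>) * \<phi> \<theta> x" for \<theta> x
  have cont: "continuous_on \<Omega> (\<psi> \<theta>)" if "\<theta> \<le> 0" for \<theta>
    using assms(3) that unfolding in_Lip_alpha_def \<psi>_def by (auto intro: continuous_on_mult)
  obtain B where B: "\<And>\<theta>. \<theta> \<le> 0 \<Longrightarrow> supn \<Omega> (\<psi> \<theta>) \<le> B"
    using assms(3) unfolding in_Lip_alpha_def \<psi>_def by blast
  obtain K where K: "\<And>\<theta> \<theta>'. \<theta> \<le> 0 \<Longrightarrow> \<theta>' \<le> 0 \<Longrightarrow> supn \<Omega> (\<lambda>x. \<psi> \<theta> x - \<psi> \<theta>' x) \<le> K * \<bar>\<theta> - \<theta>'\<bar>"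
    using assms(3) unfolding in_Lip_alpha_def \<psi>_def by blast
  define E where "E = exp (\<alpha> * R)"
  have exponent_le: "- \<alpha> * \<theta> \<le> \<alpha> * R" if "\<theta> \<in> {-R..0}" for \<theta>
    using mult_left_mono[of "-\<theta>" R \<alpha>] assms(2) that by auto
  have exp_lip: "(E * \<alpha>)-lipschitz_on {-R..0} (\<lambda>\<theta>. exp (- \<alpha> * \<theta>))"
  proof -
    have "(E * (\<bar>- \<alpha>\<bar> * 1))-lipschitz_on {-R..0} (\<lambda>\<theta>. exp (- \<alpha> * \<theta>))"
      unfolding E_def using exponent_le
      by (intro lipschitz_on_compose2[OF lipschitz_on_cmult_real[OF lipschitz_on_id]]
          lipschitz_on_subset[OF exp_lipschitz_on_atMost]) auto
    then show ?thesis
      using assms(2) by simp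
  qed
  have "(E * \<bar>K\<bar> + E * \<alpha> * max 0 B)-lipschitz_on {-R..0} (\<lambda>\<theta>. \<phi> \<theta> y)" if y: "y \<in> \<Omega>" for y
  proof -
    have "\<bar>K\<bar>-lipschitz_on {-R..0} (\<lambda>\<theta>. \<psi> \<theta> y)"
    proof (rule lipschitz_onI)
      fix \<theta> \<theta>' assume "\<theta> \<in> {-R..0}" "\<theta>' \<in> {-R..0}"
      then have "\<bar>\<psi> \<theta> y - \<psi> \<theta>' y\<bar> \<le> K * \<bar>\<theta> - \<theta>'\<bar>"
        using abs_le_supn[OF assms(1) continuous_on_diff[OF cont cont] y] K by fastforce
      also have "\<dots> \<le> \<bar>K\<bar> * \<bar>\<theta> - \<theta>'\<bar>"
        by (simp add: mult_right_mono)
      finally show "dist (\<psi> \<theta> y) (\<psi> \<theta>' y) \<le> \<bar>K\<bar> * dist \<theta> \<theta>'"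
        by (simp add: dist_real_def)
    qed simp
    moreover have "\<bar>\<psi> \<theta> y\<bar> \<le> max 0 B" if "\<theta> \<in> {-R..0}" for \<theta>
      using abs_le_supn[OF assms(1) cont y] B that by fastforce
    moreover have "\<bar>exp (- \<alpha> * \<theta>)\<bar> \<le> E" if "\<theta> \<in> {-R..0}" for \<theta>
      using exponent_le[OF that] unfolding E_def by simp
    ultimately have "(E * \<bar>K\<bar> + E * \<alpha> * max 0 B)-lipschitz_on {-R..0} (\<lambda>\<theta>. exp (- \<alpha> * \<theta>) * \<psi> \<theta> y)"
      using lipschitz_on_mult_bounded[OF exp_lip] unfolding E_def by fastforce
    moreover have "\<phi> \<theta> y = exp (- \<alpha> * \<theta>) * \<psi> \<theta> y" if "\<theta> \<in> {-R..0}" for \<theta>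
      using that by (simp add: \<psi>_def mult.assoc[symmetric] exp_add[symmetric])
    ultimately show ?thesis
      by (rule lipschitz_on_transform)
  qed
  then show ?thesis
    using that by blast
qed

lemma solution_rhs_bounded:
  fixes \<Omega> :: "'b::metric_space set"
  assumes "compact \<Omega>" "standing_F \<Omega> F" and sol: "is_solution \<Omega> F f \<phi> \<tau>0 r A \<tau>"
  obtains B where "\<And>l x. l \<in> {0..r} \<Longrightarrow> x \<in> \<Omega> \<Longrightarrow> \<bar>F (A l) (\<tau> l) (delayed A \<tau> l) x\<bar> \<le> B"
proof -
  obtain R M where RM: "0 \<le> R" "R \<le> M" "0 < M"
    and delay: "\<And>l z. l \<in> {0..r} \<Longrightarrow> z \<in> \<Omega> \<Longrightarrow> 0 \<le> \<tau> l z \<and> \<tau> l z \<le> R"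
    and bdd: "\<And>s y. s \<in> {-R..r} \<Longrightarrow> y \<in> \<Omega> \<Longrightarrow> \<bar>A s y\<bar> \<le> M"
    by (rule solutions_bounded[OF assms(1) sol sol]) blast
  obtain L where L: "0 \<le> L"
    "\<And>u v w u' v' w' a b c x.
       u \<in> CF \<Omega> \<Longrightarrow> v \<in> CF \<Omega> \<Longrightarrow> w \<in> CF (\<Omega> \<times> \<Omega>) \<Longrightarrow>
       u' \<in> CF \<Omega> \<Longrightarrow> v' \<in> CF \<Omega> \<Longrightarrow> w' \<in> CF (\<Omega> \<times> \<Omega>) \<Longrightarrow>
       \<forall>y\<in>\<Omega>. \<bar>u y\<bar> \<le> M \<and> \<bar>v y\<bar> \<le> M \<and> \<bar>u' y\<bar> \<le> M \<and> \<bar>v' y\<bar> \<le> M \<Longrightarrow>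
       \<forall>p\<in>\<Omega> \<times> \<Omega>. \<bar>w p\<bar> \<le> M \<and> \<bar>w' p\<bar> \<le> M \<Longrightarrow>
       \<forall>y\<in>\<Omega>. \<bar>u y - u' y\<bar> \<le> a \<and> \<bar>v y - v' y\<bar> \<le> b \<Longrightarrow>
       \<forall>p\<in>\<Omega> \<times> \<Omega>. \<bar>w p - w' p\<bar> \<le> c \<Longrightarrow>
       0 \<le> a \<Longrightarrow> 0 \<le> b \<Longrightarrow> 0 \<le> c \<Longrightarrow> x \<in> \<Omega> \<Longrightarrow>
       \<bar>F u v w x - F u' v' w' x\<bar> \<le> L * (a + b + c)"
    using standing_F_local_lipschitz[OF assms(1,2) RM(3)] by blast
  let ?F0 = "F (\<lambda>_. 0) (\<lambda>_. 0) (\<lambda>_. 0)"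
  have F0: "continuous_on \<Omega> ?F0"
    by (rule standing_F_continuous_on[OF assms(2)]) (auto simp: CF_def)
  have "\<bar>F (A l) (\<tau> l) (delayed A \<tau> l) x\<bar> \<le> L * (M + M + M) + supn \<Omega> ?F0"
    if l: "l \<in> {0..r}" and x: "x \<in> \<Omega>" for l x
  proof -
    have delayed_bdd: "\<forall>p\<in>\<Omega> \<times> \<Omega>. \<bar>delayed A \<tau> l p\<bar> \<le> M"
      using delay[OF l] bdd l by fastforce
    have "\<bar>F (A l) (\<tau> l) (delayed A \<tau> l) x - ?F0 x\<bar> \<le> L * (M + M + M)"
    proof (rule L(2)[OF solution_args_in_CF[OF assms(1) sol l]])
      show "\<forall>y\<in>\<Omega>. \<bar>A l y\<bar> \<le> M \<and> \<bar>\<tau> l y\<bar> \<le> M \<and> \<bar>0\<bar> \<le> M \<and> \<bar>0\<bar> \<le> M"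
        "\<forall>y\<in>\<Omega>. \<bar>A l y - 0\<bar> \<le> M \<and> \<bar>\<tau> l y - 0\<bar> \<le> M"
        using bdd delay[OF l] RM l by fastforce+
    qed (use delayed_bdd RM x in \<open>auto simp: CF_def\<close>)
    moreover have "\<bar>?F0 x\<bar> \<le> supn \<Omega> ?F0"
      by (rule abs_le_supn[OF assms(1) F0 x])
    ultimately show ?thesis
      by linarith
  qed
  then show ?thesis
    using that by blast
qed

lemma has_integral_bounded_lipschitz_on:
  fixes g h :: "real \<Rightarrow> real"
  assumes "\<And>t. t \<in> {a..b} \<Longrightarrow> (g has_integral (h t - c)) {a..t}"
    and "0 \<le> B" "\<And>t. t \<in> {a..b} \<Longrightarrow> \<bar>g t\<bar> \<le> B"
  shows "B-lipschitz_on {a..b} h"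
proof (rule lipschitz_on_leI)
  fix s t assume s: "s \<in> {a..b}" and t: "t \<in> {a..b}" and "s \<le> t"
  have int: "g integrable_on {a..t}"
    using assms(1)[OF t] by blast
  have "integral {a..s} g + integral {s..t} g = integral {a..t} g"
    using s \<open>s \<le> t\<close> by (intro Henstock_Kurzweil_Integration.integral_combine int) auto
  then have "h t - h s = integral {s..t} g"
    using integral_unique[OF assms(1)[OF s]] integral_unique[OF assms(1)[OF t]] by simp
  also have "norm \<dots> \<le> integral {s..t} (\<lambda>_. B)"
    using s t assms(3) integrable_subinterval_real[OF int, of s t]
    by (intro integral_norm_bound_integral) auto
  finally show "dist (h s) (h t) \<le> B * dist s t"
    using \<open>s \<le> t\<close> by (simp add: dist_real_def abs_minus_commute mult.commute)
qed (rule assms(2))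

lemma solution_lipschitz_on:
  fixes \<Omega> :: "'b::metric_space set"
  assumes "compact \<Omega>" "0 \<le> \<alpha>" "standing_F \<Omega> F" "in_Lip_alpha \<alpha> \<Omega> \<phi>" "0 \<le> R"
    and sol: "is_solution \<Omega> F f \<phi> \<tau>0 r A \<tau>"
  obtains K where "0 \<le> K" "\<And>y. y \<in> \<Omega> \<Longrightarrow> K-lipschitz_on {-R..r} (\<lambda>s. A s y)"
proof -
  obtain K where K: "\<And>y. y \<in> \<Omega> \<Longrightarrow> K-lipschitz_on {-R..0} (\<lambda>\<theta>. \<phi> \<theta> y)"
    using Lip_alpha_lipschitz_on[OF assms(1,2,4,5)] by blast
  obtain B where B: "\<And>l x. l \<in> {0..r} \<Longrightarrow> x \<in> \<Omega> \<Longrightarrow> \<bar>F (A l) (\<tau> l) (delayed A \<tau> l) x\<bar> \<le> B"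
    using solution_rhs_bounded[OF assms(1,3) sol] by blast
  have "(max K (max 0 B))-lipschitz_on {-R..r} (\<lambda>s. A s y)" if y: "y \<in> \<Omega>" for y
  proof -
    have "K-lipschitz_on {-R..0} (\<lambda>s. A s y)"
      by (rule lipschitz_on_transform[OF K[OF y]]) (simp add: solution_history[OF sol _ y])
    moreover have "(max 0 B)-lipschitz_on {0..r} (\<lambda>s. A s y)"
      using solution_integral_equation[OF sol _ y] B y
      by (intro has_integral_bounded_lipschitz_on) force+
    ultimately have "(max K (max 0 B))-lipschitz_on {-R..r} (\<lambda>s. if s \<le> 0 then A s y else A s y)"
      by (rule lipschitz_on_concat_max) simp
    then show ?thesis
      by simp
  qed
  then show ?thesis
    using that[of "max K (max 0 B)"] by simp
qed

lemma continuous_on_standing_f_cont_into: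
  fixes \<Omega> :: "'b::metric_space set"
  assumes "compact \<Omega>" "standing_f \<Omega> f" "cont_into I \<Omega> A" "z \<in> \<Omega>"
  shows "continuous_on I (\<lambda>s. f (A s) z)"
  unfolding continuous_on_iff
proof (intro ballI allI impI)
  fix t e :: real assume t: "t \<in> I" and e: "0 < e"
  obtain L where L: "0 \<le> L"
    "\<And>u u' a x. u \<in> CF \<Omega> \<Longrightarrow> u' \<in> CF \<Omega> \<Longrightarrow> 0 \<le> a \<Longrightarrow> \<forall>y\<in>\<Omega>. \<bar>u y - u' y\<bar> \<le> a \<Longrightarrow>
       x \<in> \<Omega> \<Longrightarrow> \<bar>f u x - f u' x\<bar> \<le> L * a"
    using standing_f_lipschitz[OF assms(1,2)] by blast
  have "0 < e / (L + 1)"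
    using e L(1) by simp
  then obtain d where d: "d > 0" "\<forall>s\<in>I. \<bar>s - t\<bar> < d \<longrightarrow> supn \<Omega> (\<lambda>x. A s x - A t x) < e / (L + 1)"
    using assms(3) t unfolding cont_into_def by blast
  have "dist (f (A s) z) (f (A t) z) < e" if s: "s \<in> I" "dist s t < d" for s
  proof -
    let ?a = "supn \<Omega> (\<lambda>x. A s x - A t x)"
    have "\<forall>y\<in>\<Omega>. \<bar>A s y - A t y\<bar> \<le> ?a"
      using cont_into_abs_diff_le_supn[OF assms(1,3) s(1) t] by blast
    moreover have "0 \<le> ?a"
      using cont_into_abs_diff_le_supn[OF assms(1,3) s(1) t assms(4)] by linarith
    ultimately have "\<bar>f (A s) z - f (A t) z\<bar> \<le> L * ?a"
      by (intro L(2) cont_into_CF[OF assms(3)] s(1) t assms(4))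
    also have "\<dots> \<le> L * (e / (L + 1))"
      using d s L(1) by (intro mult_left_mono) (auto simp: dist_real_def)
    also have "\<dots> < e"
      using e L(1) by (simp add: field_simps)
    finally show ?thesis
      by (simp add: dist_real_def)
  qed
  then show "\<exists>d>0. \<forall>s\<in>I. dist s t < d \<longrightarrow> dist (f (A s) z) (f (A t) z) < e"
    using d(1) by blast
qed

lemma delay_gap_bound:
  fixes \<Omega> :: "'b::metric_space set"
  assumes "compact \<Omega>" "standing_f \<Omega> f"
    and f_lip: "\<And>u u' a x. u \<in> CF \<Omega> \<Longrightarrow> u' \<in> CF \<Omega> \<Longrightarrow> 0 \<le> a \<Longrightarrow> \<forall>y\<in>\<Omega>. \<bar>u y - u' y\<bar> \<le> a \<Longrightarrow>
       x \<in> \<Omega> \<Longrightarrow> \<bar>f u x - f u' x\<bar> \<le> L * a"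
    and sol1: "is_solution \<Omega> F f \<phi> \<tau>0 r A1 \<tau>1" and sol2: "is_solution \<Omega> F f \<phi> \<tau>0 r A2 \<tau>2"
    and l: "l \<in> {0..r}" and z: "z \<in> \<Omega>" and longer: "\<tau>2 l z \<le> \<tau>1 l z"
    and lower: "\<And>s. s \<in> {l - \<tau>1 l z..l - \<tau>2 l z} \<Longrightarrow> m \<le> f (A1 s) z"
    and close: "0 \<le> E" "\<forall>s\<le>l. \<forall>y\<in>\<Omega>. \<bar>A1 s y - A2 s y\<bar> \<le> E"
  shows "m * (\<tau>1 l z - \<tau>2 l z) \<le> L * E * \<tau>2 l z"
proof -
  define T1 where "T1 = \<tau>1 l z"
  define T2 where "T2 = \<tau>2 l z"
  let ?h1 = "\<lambda>s. f (A1 s) z" and ?h2 = "\<lambda>s. f (A2 s) z"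
  have T: "0 \<le> T2" "T2 \<le> T1"
    using solution_delay_nonneg[OF sol2 l z] longer unfolding T1_def T2_def by auto
  have "continuous_on {..r} ?h1" "continuous_on {..r} ?h2"
    using continuous_on_standing_f_cont_into[OF assms(1,2) _ z]
      solution_cont_into[OF sol1] solution_cont_into[OF sol2] by auto
  then have int: "?h1 integrable_on {l - T1..l}" "?h1 integrable_on {l - T2..l}" "?h2 integrable_on {l - T2..l}"
    using l by (auto intro!: integrable_continuous_interval elim!: continuous_on_subset)
  have "integral {l - T1..l - T2} ?h1 + integral {l - T2..l} ?h1 = integral {l - T1..l} ?h1"
    using T by (intro Henstock_Kurzweil_Integration.integral_combine int) auto
  also have "\<dots> = integral {l - T2..l} ?h2"
    using solution_threshold[OF sol1 l z] solution_threshold[OF sol2 l z] unfolding T1_def T2_def by simp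
  finally have gap: "integral {l - T1..l - T2} ?h1 = integral {l - T2..l} (\<lambda>s. ?h2 s - ?h1 s)"
    using integral_diff[OF int(3,2)] by simp
  have "m * (T1 - T2) = integral {l - T1..l - T2} (\<lambda>_. m)"
    using T by simp
  also have "\<dots> \<le> integral {l - T1..l - T2} ?h1"
    using T lower[folded T1_def T2_def]
    by (intro integral_le integrable_subinterval_real[OF int(1)]) auto
  also have "\<dots> \<le> integral {l - T2..l} (\<lambda>_. L * E)"
    unfolding gap
  proof (rule integral_le[OF integrable_diff[OF int(3,2)]])
    fix s assume s: "s \<in> {l - T2..l}"
    have "\<bar>?h2 s - ?h1 s\<bar> \<le> L * E"
      using s l close by (intro f_lip cont_into_CF[OF solution_cont_into[OF sol2]]
          cont_into_CF[OF solution_cont_into[OF sol1]] z) (auto simp: abs_minus_commute)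
    then show "?h2 s - ?h1 s \<le> L * E"
      by simp
  qed (rule integrable_const_ivl)
  also have "\<dots> = L * E * T2"
    using T by simp
  finally show ?thesis
    unfolding T1_def T2_def .
qed

lemma delay_difference_bound:
  fixes \<Omega> :: "'b::metric_space set"
  assumes "compact \<Omega>" "standing_f \<Omega> f"
    and sol1: "is_solution \<Omega> F f \<phi> \<tau>0 r A1 \<tau>1" and sol2: "is_solution \<Omega> F f \<phi> \<tau>0 r A2 \<tau>2"
  obtains C where "0 \<le> C"
    "\<And>l E z. l \<in> {0..r} \<Longrightarrow> z \<in> \<Omega> \<Longrightarrow> 0 \<le> E \<Longrightarrow> \<forall>s\<le>l. \<forall>y\<in>\<Omega>. \<bar>A1 s y - A2 s y\<bar> \<le> E \<Longrightarrow>
       \<bar>\<tau>1 l z - \<tau>2 l z\<bar> \<le> C * E"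
proof -
  obtain R M where RM: "0 \<le> R" "R \<le> M" "0 < M"
    and delay: "\<And>l z. l \<in> {0..r} \<Longrightarrow> z \<in> \<Omega> \<Longrightarrow> 0 \<le> \<tau>1 l z \<and> \<tau>1 l z \<le> R \<and> 0 \<le> \<tau>2 l z \<and> \<tau>2 l z \<le> R"
    and bdd: "\<And>s y. s \<in> {-R..r} \<Longrightarrow> y \<in> \<Omega> \<Longrightarrow> \<bar>A1 s y\<bar> \<le> M \<and> \<bar>A2 s y\<bar> \<le> M"
    by (rule solutions_bounded[OF assms(1) sol1 sol2]) blast
  obtain L where L: "0 \<le> L"
    "\<And>u u' a x. u \<in> CF \<Omega> \<Longrightarrow> u' \<in> CF \<Omega> \<Longrightarrow> 0 \<le> a \<Longrightarrow> \<forall>y\<in>\<Omega>. \<bar>u y - u' y\<bar> \<le> a \<Longrightarrow>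
       x \<in> \<Omega> \<Longrightarrow> \<bar>f u x - f u' x\<bar> \<le> L * a"
    by (rule standing_f_lipschitz[OF assms(1,2)]) blast
  have const: "(\<lambda>_. M) \<in> CF \<Omega>"
    by (simp add: CF_def)
  obtain m where m: "0 < m" "\<And>z. z \<in> \<Omega> \<Longrightarrow> m \<le> f (\<lambda>_. M) z"
    using compact_continuous_pos_lower_bound[OF assms(1) standing_f_continuous_on[OF assms(2) const]]
      standing_f_pos[OF assms(2) const] by blast
  have lower: "m \<le> f (A1 s) z" "m \<le> f (A2 s) z" if s: "s \<in> {-R..r}" and z: "z \<in> \<Omega>" for s z
    using m(2)[OF z] standing_f_antimono[OF assms(2) _ const _ z, of "A1 s"]
      standing_f_antimono[OF assms(2) _ const _ z, of "A2 s"] bdd[OF s] s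
      cont_into_CF[OF solution_cont_into[OF sol1]] cont_into_CF[OF solution_cont_into[OF sol2]]
    by (fastforce simp: abs_le_iff)+
  have "\<bar>\<tau>1 l z - \<tau>2 l z\<bar> \<le> R * L / m * E"
    if l: "l \<in> {0..r}" and z: "z \<in> \<Omega>" and E: "0 \<le> E" "\<forall>s\<le>l. \<forall>y\<in>\<Omega>. \<bar>A1 s y - A2 s y\<bar> \<le> E"
    for l E z
  proof -
    have LE: "0 \<le> L * E"
      using L(1) E(1) by simp
    have "m * \<bar>\<tau>1 l z - \<tau>2 l z\<bar> \<le> L * E * R"
    proof (cases "\<tau>2 l z \<le> \<tau>1 l z")
      case True
      have "m * (\<tau>1 l z - \<tau>2 l z) \<le> L * E * \<tau>2 l z"
        using delay[OF l z] l z by (intro delay_gap_bound[OF assms(1,2) L(2) sol1 sol2 l z True _ E] lower) auto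
      also have "\<dots> \<le> L * E * R"
        using delay[OF l z] LE by (intro mult_left_mono) auto
      finally show ?thesis
        using True by simp
    next
      case False
      have "m * (\<tau>2 l z - \<tau>1 l z) \<le> L * E * \<tau>1 l z"
        using delay[OF l z] l z False E(2)
        by (intro delay_gap_bound[OF assms(1,2) L(2) sol2 sol1 l z _ _ E(1)] lower)
          (auto simp: abs_minus_commute)
      also have "\<dots> \<le> L * E * R"
        using delay[OF l z] LE by (intro mult_left_mono) auto
      finally show ?thesis
        using False by simp
    qed
    then show ?thesis
      using m(1) by (simp add: field_simps)
  qed
  moreover have "0 \<le> R * L / m"
    using RM(1) L(1) m(1) by simp
  ultimately show ?thesis
    using that by blast
qed

lemma delayed_difference_bound:
  fixes A A' \<tau> \<tau>' :: "real \<Rightarrow> 'b \<Rightarrow> real"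
  assumes lip: "\<And>y. y \<in> \<Omega> \<Longrightarrow> Lip-lipschitz_on {-R..r} (\<lambda>s. A s y)" and l: "l \<in> {0..r}"
    and delay: "\<And>z. z \<in> \<Omega> \<Longrightarrow> 0 \<le> \<tau> l z \<and> \<tau> l z \<le> R \<and> 0 \<le> \<tau>' l z \<and> \<tau>' l z \<le> R"
    and delay_close: "\<And>z. z \<in> \<Omega> \<Longrightarrow> \<bar>\<tau> l z - \<tau>' l z\<bar> \<le> D"
    and close: "\<forall>s\<le>l. \<forall>y\<in>\<Omega>. \<bar>A s y - A' s y\<bar> \<le> E"
    and p: "p \<in> \<Omega> \<times> \<Omega>"
  shows "\<bar>delayed A \<tau> l p - delayed A' \<tau>' l p\<bar> \<le> Lip * D + E"
proof -
  obtain z y where zy: "p = (z, y)" "z \<in> \<Omega>" "y \<in> \<Omega>"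
    using p by auto
  let ?s1 = "l - \<tau> l z" and ?s2 = "l - \<tau>' l z"
  have "\<bar>A ?s1 y - A ?s2 y\<bar> \<le> Lip * \<bar>\<tau> l z - \<tau>' l z\<bar>"
    using lipschitz_onD[OF lip[OF zy(3)], of ?s1 ?s2] delay[OF zy(2)] l
    by (simp add: dist_real_def abs_minus_commute)
  also have "\<dots> \<le> Lip * D"
    using delay_close[OF zy(2)] lipschitz_on_nonneg[OF lip[OF zy(3)]] by (rule mult_left_mono)
  finally have "\<bar>A ?s1 y - A ?s2 y\<bar> \<le> Lip * D" .
  moreover have "\<bar>A ?s2 y - A' ?s2 y\<bar> \<le> E"
    using close delay[OF zy(2)] zy(3) by auto
  ultimately show ?thesis
    using zy(1) by simp
qed

lemma rhs_difference_bound: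
  fixes \<Omega> :: "'b::metric_space set"
  assumes "compact \<Omega>" "0 \<le> \<alpha>" "standing_F \<Omega> F" "standing_f \<Omega> f" "in_Lip_alpha \<alpha> \<Omega> \<phi>"
    and sol1: "is_solution \<Omega> F f \<phi> \<tau>0 r A1 \<tau>1" and sol2: "is_solution \<Omega> F f \<phi> \<tau>0 r A2 \<tau>2"
  obtains K where "0 \<le> K"
    "\<And>l E x. l \<in> {0..r} \<Longrightarrow> x \<in> \<Omega> \<Longrightarrow> 0 \<le> E \<Longrightarrow> \<forall>s\<le>l. \<forall>y\<in>\<Omega>. \<bar>A1 s y - A2 s y\<bar> \<le> E \<Longrightarrow>
       \<bar>F (A1 l) (\<tau>1 l) (delayed A1 \<tau>1 l) x - F (A2 l) (\<tau>2 l) (delayed A2 \<tau>2 l) x\<bar> \<le> K * E"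
proof -
  obtain C where C: "0 \<le> C"
    "\<And>l E z. l \<in> {0..r} \<Longrightarrow> z \<in> \<Omega> \<Longrightarrow> 0 \<le> E \<Longrightarrow> \<forall>s\<le>l. \<forall>y\<in>\<Omega>. \<bar>A1 s y - A2 s y\<bar> \<le> E \<Longrightarrow>
       \<bar>\<tau>1 l z - \<tau>2 l z\<bar> \<le> C * E"
    by (rule delay_difference_bound[OF assms(1,4) sol1 sol2]) blast
  obtain R M where RM: "0 \<le> R" "R \<le> M" "0 < M"
    and delay: "\<And>l z. l \<in> {0..r} \<Longrightarrow> z \<in> \<Omega> \<Longrightarrow> 0 \<le> \<tau>1 l z \<and> \<tau>1 l z \<le> R \<and> 0 \<le> \<tau>2 l z \<and> \<tau>2 l z \<le> R"
    and bdd: "\<And>s y. s \<in> {-R..r} \<Longrightarrow> y \<in> \<Omega> \<Longrightarrow> \<bar>A1 s y\<bar> \<le> M \<and> \<bar>A2 s y\<bar> \<le> M"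
    by (rule solutions_bounded[OF assms(1) sol1 sol2]) blast
  obtain Lip where Lip: "0 \<le> Lip" "\<And>y. y \<in> \<Omega> \<Longrightarrow> Lip-lipschitz_on {-R..r} (\<lambda>s. A1 s y)"
    by (rule solution_lipschitz_on[OF assms(1,2,3,5) RM(1) sol1]) blast
  obtain L where L: "0 \<le> L"
    "\<And>u v w u' v' w' a b c x.
       u \<in> CF \<Omega> \<Longrightarrow> v \<in> CF \<Omega> \<Longrightarrow> w \<in> CF (\<Omega> \<times> \<Omega>) \<Longrightarrow>
       u' \<in> CF \<Omega> \<Longrightarrow> v' \<in> CF \<Omega> \<Longrightarrow> w' \<in> CF (\<Omega> \<times> \<Omega>) \<Longrightarrow>
       \<forall>y\<in>\<Omega>. \<bar>u y\<bar> \<le> M \<and> \<bar>v y\<bar> \<le> M \<and> \<bar>u' y\<bar> \<le> M \<and> \<bar>v' y\<bar> \<le> M \<Longrightarrow>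
       \<forall>p\<in>\<Omega> \<times> \<Omega>. \<bar>w p\<bar> \<le> M \<and> \<bar>w' p\<bar> \<le> M \<Longrightarrow>
       \<forall>y\<in>\<Omega>. \<bar>u y - u' y\<bar> \<le> a \<and> \<bar>v y - v' y\<bar> \<le> b \<Longrightarrow>
       \<forall>p\<in>\<Omega> \<times> \<Omega>. \<bar>w p - w' p\<bar> \<le> c \<Longrightarrow>
       0 \<le> a \<Longrightarrow> 0 \<le> b \<Longrightarrow> 0 \<le> c \<Longrightarrow> x \<in> \<Omega> \<Longrightarrow>
       \<bar>F u v w x - F u' v' w' x\<bar> \<le> L * (a + b + c)"
    by (rule standing_F_local_lipschitz[OF assms(1,3) RM(3)]) blast
  have "\<bar>F (A1 l) (\<tau>1 l) (delayed A1 \<tau>1 l) x - F (A2 l) (\<tau>2 l) (delayed A2 \<tau>2 l) x\<bar>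
      \<le> L * (2 + C + Lip * C) * E"
    if l: "l \<in> {0..r}" and x: "x \<in> \<Omega>" and E: "0 \<le> E" "\<forall>s\<le>l. \<forall>y\<in>\<Omega>. \<bar>A1 s y - A2 s y\<bar> \<le> E"
    for l E x
  proof -
    have delay_close: "\<bar>\<tau>1 l z - \<tau>2 l z\<bar> \<le> C * E" if "z \<in> \<Omega>" for z
      using C(2)[OF l that E] .
    have delayed_close: "\<bar>delayed A1 \<tau>1 l p - delayed A2 \<tau>2 l p\<bar> \<le> Lip * (C * E) + E"
      if "p \<in> \<Omega> \<times> \<Omega>" for p
      by (rule delayed_difference_bound[where \<Omega> = \<Omega> and A = A1 and \<tau> = \<tau>1 and \<tau>' = \<tau>2,
            OF Lip(2) l delay[OF l] delay_close E(2) that])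
    note in_CF = solution_args_in_CF[OF assms(1) sol1 l] solution_args_in_CF[OF assms(1) sol2 l]
    have "\<bar>F (A1 l) (\<tau>1 l) (delayed A1 \<tau>1 l) x - F (A2 l) (\<tau>2 l) (delayed A2 \<tau>2 l) x\<bar>
        \<le> L * (E + C * E + (Lip * (C * E) + E))"
    proof (rule L(2)[OF in_CF])
      show "\<forall>y\<in>\<Omega>. \<bar>A1 l y\<bar> \<le> M \<and> \<bar>\<tau>1 l y\<bar> \<le> M \<and> \<bar>A2 l y\<bar> \<le> M \<and> \<bar>\<tau>2 l y\<bar> \<le> M"
        using bdd delay[OF l] RM l by fastforce
      show "\<forall>p\<in>\<Omega> \<times> \<Omega>. \<bar>delayed A1 \<tau>1 l p\<bar> \<le> M \<and> \<bar>delayed A2 \<tau>2 l p\<bar> \<le> M"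
        using bdd delay[OF l] l by fastforce
      show "\<forall>y\<in>\<Omega>. \<bar>A1 l y - A2 l y\<bar> \<le> E \<and> \<bar>\<tau>1 l y - \<tau>2 l y\<bar> \<le> C * E"
        using E(2) delay_close by auto
    qed (use delayed_close E C(1) Lip(1) x in \<open>auto intro: add_nonneg_nonneg\<close>)
    then show ?thesis
      by (simp add: algebra_simps)
  qed
  moreover have "0 \<le> L * (2 + C + Lip * C)"
    using L(1) C(1) Lip(1) by simp
  ultimately show ?thesis
    using that by blast
qed

lemma volterra_difference_eq_integral:
  fixes A1 A2 G1 G2 :: "real \<Rightarrow> 'b \<Rightarrow> real"
  assumes eq1: "\<And>t x. t \<in> {0..r} \<Longrightarrow> x \<in> \<Omega> \<Longrightarrow> ((\<lambda>l. G1 l x) has_integral (A1 t x - c x)) {0..t}"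
    and eq2: "\<And>t x. t \<in> {0..r} \<Longrightarrow> x \<in> \<Omega> \<Longrightarrow> ((\<lambda>l. G2 l x) has_integral (A2 t x - c x)) {0..t}"
    and lip: "\<And>l E x. l \<in> {0..r} \<Longrightarrow> x \<in> \<Omega> \<Longrightarrow> 0 \<le> E \<Longrightarrow> \<forall>s\<le>l. \<forall>y\<in>\<Omega>. \<bar>A1 s y - A2 s y\<bar> \<le> E \<Longrightarrow>
       \<bar>G1 l x - G2 l x\<bar> \<le> K * E"
    and agree: "\<And>t x. t \<le> a \<Longrightarrow> x \<in> \<Omega> \<Longrightarrow> A1 t x = A2 t x"
    and "0 \<le> a" "t \<in> {a..r}" "x \<in> \<Omega>"
  shows "A1 t x - A2 t x = integral {a..t} (\<lambda>l. G1 l x - G2 l x)"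
proof -
  let ?g = "\<lambda>l. G1 l x - G2 l x"
  have t: "t \<in> {0..r}"
    using assms(5,6) by auto
  have g: "(?g has_integral (A1 t x - A2 t x)) {0..t}"
    using has_integral_diff[OF eq1[OF t assms(7)] eq2[OF t assms(7)]] by simp
  have "integral {0..a} ?g = integral {0..a} (\<lambda>_. 0)"
  proof (rule integral_cong)
    fix l assume "l \<in> {0..a}"
    then show "?g l = 0"
      using lip[of l x 0] agree assms(5-7) by auto
  qed
  moreover have "integral {0..a} ?g + integral {a..t} ?g = integral {0..t} ?g"
    using assms(5,6) by (intro Henstock_Kurzweil_Integration.integral_combine has_integral_integrable[OF g]) auto
  ultimately show ?thesis
    using integral_unique[OF g] by simp
qed

lemma volterra_agreement_step:
  fixes A1 A2 G1 G2 :: "real \<Rightarrow> 'b \<Rightarrow> real"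
  assumes eq1: "\<And>t x. t \<in> {0..r} \<Longrightarrow> x \<in> \<Omega> \<Longrightarrow> ((\<lambda>l. G1 l x) has_integral (A1 t x - c x)) {0..t}"
    and eq2: "\<And>t x. t \<in> {0..r} \<Longrightarrow> x \<in> \<Omega> \<Longrightarrow> ((\<lambda>l. G2 l x) has_integral (A2 t x - c x)) {0..t}"
    and lip: "\<And>l E x. l \<in> {0..r} \<Longrightarrow> x \<in> \<Omega> \<Longrightarrow> 0 \<le> E \<Longrightarrow> \<forall>s\<le>l. \<forall>y\<in>\<Omega>. \<bar>A1 s y - A2 s y\<bar> \<le> E \<Longrightarrow>
       \<bar>G1 l x - G2 l x\<bar> \<le> K * E"
    and bdd: "\<And>s y. s \<in> {0..r} \<Longrightarrow> y \<in> \<Omega> \<Longrightarrow> \<bar>A1 s y - A2 s y\<bar> \<le> B"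
    and K: "0 \<le> K" and \<delta>: "0 < \<delta>" "K * \<delta> \<le> 1/2" and a: "0 \<le> a" "a \<le> r"
    and agree: "\<And>t x. t \<le> a \<Longrightarrow> x \<in> \<Omega> \<Longrightarrow> A1 t x = A2 t x"
  shows "\<forall>t\<le>min (a + \<delta>) r. \<forall>x\<in>\<Omega>. A1 t x = A2 t x"
proof -
  define b where "b = min (a + \<delta>) r"
  define gaps where "gaps = insert 0 ((\<lambda>(s, y). \<bar>A1 s y - A2 s y\<bar>) ` ({a..b} \<times> \<Omega>))"
  define D where "D = Sup gaps"
  have b: "a \<le> b" "b \<le> r" "b - a \<le> \<delta>"
    using a \<delta> unfolding b_def by auto
  have gaps_bdd: "bdd_above gaps"
  proof (rule bdd_aboveI[of _ "max 0 B"])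
    fix v assume "v \<in> gaps"
    then consider "v = 0" | s y where "s \<in> {a..b}" "y \<in> \<Omega>" "v = \<bar>A1 s y - A2 s y\<bar>"
      unfolding gaps_def by auto
    then show "v \<le> max 0 B"
    proof cases
      case 2
      then have "s \<in> {0..r}"
        using a b by auto
      then show ?thesis
        using bdd[of s y] 2 by simp
    qed simp
  qed
  have D: "0 \<le> D"
    unfolding D_def gaps_def using gaps_bdd[unfolded gaps_def] by (auto intro: cSup_upper)
  have close: "\<forall>s\<le>b. \<forall>y\<in>\<Omega>. \<bar>A1 s y - A2 s y\<bar> \<le> D"
  proof (intro allI impI ballI)
    fix s y assume "s \<le> b" "y \<in> \<Omega>"
    then show "\<bar>A1 s y - A2 s y\<bar> \<le> D"
      using agree[of s y] D cSup_upper[OF _ gaps_bdd, of "\<bar>A1 s y - A2 s y\<bar>"]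
      unfolding D_def gaps_def by (cases "s \<le> a") force+
  qed
  \<comment> \<open>on [a, b] the difference is an integral, over length at most \<delta>, of a term bounded by K D\<close>
  have "\<bar>A1 t x - A2 t x\<bar> \<le> D / 2" if t: "t \<in> {a..b}" and x: "x \<in> \<Omega>" for t x
  proof -
    let ?g = "\<lambda>l. G1 l x - G2 l x"
    have tr: "t \<in> {0..r}"
      using t a b by auto
    have g: "(?g has_integral (A1 t x - A2 t x)) {0..t}"
      using has_integral_diff[OF eq1[OF tr x] eq2[OF tr x]] by simp
    have "A1 t x - A2 t x = integral {a..t} ?g"
      using t a b by (intro volterra_difference_eq_integral[OF eq1 eq2 lip agree a(1) _ x]) auto
    also have "norm \<dots> \<le> integral {a..t} (\<lambda>_. K * D)"
      using integrable_subinterval_real[OF has_integral_integrable[OF g], of a t] t a b x close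
      by (intro integral_norm_bound_integral) (auto intro!: lip D)
    also have "\<dots> = K * D * (t - a)"
      using t by simp
    also have "\<dots> \<le> K * D * \<delta>"
      using t b K D by (intro mult_left_mono) auto
    also have "\<dots> \<le> D / 2"
      using \<delta>(2) D mult_left_mono[of "K * \<delta>" "1/2" D] by (simp add: algebra_simps)
    finally show ?thesis
      by simp
  qed
  then have "D \<le> D / 2"
    unfolding D_def gaps_def using D[unfolded D_def gaps_def] by (intro cSup_least) auto
  then show ?thesis
    using close D unfolding b_def by force
qed

lemma volterra_uniqueness:
  fixes A1 A2 G1 G2 :: "real \<Rightarrow> 'b \<Rightarrow> real"
  assumes eq1: "\<And>t x. t \<in> {0..r} \<Longrightarrow> x \<in> \<Omega> \<Longrightarrow> ((\<lambda>l. G1 l x) has_integral (A1 t x - c x)) {0..t}"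
    and eq2: "\<And>t x. t \<in> {0..r} \<Longrightarrow> x \<in> \<Omega> \<Longrightarrow> ((\<lambda>l. G2 l x) has_integral (A2 t x - c x)) {0..t}"
    and lip: "\<And>l E x. l \<in> {0..r} \<Longrightarrow> x \<in> \<Omega> \<Longrightarrow> 0 \<le> E \<Longrightarrow> \<forall>s\<le>l. \<forall>y\<in>\<Omega>. \<bar>A1 s y - A2 s y\<bar> \<le> E \<Longrightarrow>
       \<bar>G1 l x - G2 l x\<bar> \<le> K * E"
    and bdd: "\<And>s y. s \<in> {0..r} \<Longrightarrow> y \<in> \<Omega> \<Longrightarrow> \<bar>A1 s y - A2 s y\<bar> \<le> B"
    and K: "0 \<le> K" and r: "0 \<le> r"
    and history: "\<And>t x. t \<le> 0 \<Longrightarrow> x \<in> \<Omega> \<Longrightarrow> A1 t x = A2 t x"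
  shows "\<forall>t\<le>r. \<forall>x\<in>\<Omega>. A1 t x = A2 t x"
proof -
  define \<delta> where "\<delta> = 1 / (2 * (K + 1))"
  have \<delta>: "0 < \<delta>" "K * \<delta> \<le> 1/2"
    using K unfolding \<delta>_def by (simp_all add: field_simps)
  have agree: "\<forall>t\<le>min (real n * \<delta>) r. \<forall>x\<in>\<Omega>. A1 t x = A2 t x" for n :: nat
  proof (induction n)
    case 0
    then show ?case
      using history r by simp
  next
    case (Suc n)
    have "\<forall>t\<le>min (min (real n * \<delta>) r + \<delta>) r. \<forall>x\<in>\<Omega>. A1 t x = A2 t x"
      using Suc.IH \<delta> r
      by (intro volterra_agreement_step[OF eq1 eq2 lip bdd K \<delta>]) auto
    moreover have "min (real (Suc n) * \<delta>) r \<le> min (min (real n * \<delta>) r + \<delta>) r"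
      using \<delta>(1) by (simp add: algebra_simps min_def)
    ultimately show ?case
      by force
  qed
  show ?thesis
  proof (intro allI impI ballI)
    fix t x assume "t \<le> r" "x \<in> \<Omega>"
    obtain n :: nat where "t / \<delta> \<le> real n"
      using real_arch_simple by blast
    then have "t \<le> min (real n * \<delta>) r"
      using \<delta>(1) \<open>t \<le> r\<close> by (simp add: divide_le_eq)
    then show "A1 t x = A2 t x"
      using agree \<open>x \<in> \<Omega>\<close> by blast
  qed
qed

theorem lemma4p3:
  fixes \<Omega> :: "(real ^ 'n) set"
    and F :: "((real ^ 'n) \<Rightarrow> real) \<Rightarrow> ((real ^ 'n) \<Rightarrow> real) \<Rightarrow> ((real ^ 'n) \<times> (real ^ 'n) \<Rightarrow> real) \<Rightarrow> ((real ^ 'n) \<Rightarrow> real)"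
    and f :: "((real ^ 'n) \<Rightarrow> real) \<Rightarrow> ((real ^ 'n) \<Rightarrow> real)"
    and \<phi> A1 \<tau>1 A2 \<tau>2 :: "real \<Rightarrow> (real ^ 'n) \<Rightarrow> real"
    and \<tau>0 :: "(real ^ 'n) \<Rightarrow> real"
    and \<alpha> M0 r :: real
  assumes "compact \<Omega>"
    and "\<alpha> \<ge> 0"
    and "standing_F \<Omega> F"
    and "standing_f \<Omega> f"
    and "M0 > 0"
    and "in_Lip_alpha \<alpha> \<Omega> \<phi>"
    and "continuous_on \<Omega> \<tau>0" and "\<forall>x\<in>\<Omega>. 0 \<le> \<tau>0 x"
    and "Lip_alpha_norm \<alpha> \<Omega> \<phi> + supn \<Omega> \<tau>0 \<le> M0"
    and "r > 0"
    and "is_solution \<Omega> F f \<phi> \<tau>0 r A1 \<tau>1"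
    and "is_solution \<Omega> F f \<phi> \<tau>0 r A2 \<tau>2"
  shows "(\<forall>t\<le>r. \<forall>x\<in>\<Omega>. A1 t x = A2 t x) \<and> (\<forall>t\<in>{0..r}. \<forall>x\<in>\<Omega>. \<tau>1 t x = \<tau>2 t x)"
proof -
  note sol1 = assms(11) and sol2 = assms(12)
  obtain K where K: "0 \<le> K"
    "\<And>l E x. l \<in> {0..r} \<Longrightarrow> x \<in> \<Omega> \<Longrightarrow> 0 \<le> E \<Longrightarrow> \<forall>s\<le>l. \<forall>y\<in>\<Omega>. \<bar>A1 s y - A2 s y\<bar> \<le> E \<Longrightarrow>
       \<bar>F (A1 l) (\<tau>1 l) (delayed A1 \<tau>1 l) x - F (A2 l) (\<tau>2 l) (delayed A2 \<tau>2 l) x\<bar> \<le> K * E"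
    by (rule rhs_difference_bound[OF assms(1-4,6) sol1 sol2]) blast
  obtain R M where "0 \<le> R" and bdd: "\<And>s y. s \<in> {-R..r} \<Longrightarrow> y \<in> \<Omega> \<Longrightarrow> \<bar>A1 s y\<bar> \<le> M \<and> \<bar>A2 s y\<bar> \<le> M"
    by (rule solutions_bounded[OF assms(1) sol1 sol2]) blast
  have A_eq: "\<forall>t\<le>r. \<forall>x\<in>\<Omega>. A1 t x = A2 t x"
  proof (rule volterra_uniqueness[OF solution_integral_equation[OF sol1] solution_integral_equation[OF sol2] K(2)])
    show "\<bar>A1 s y - A2 s y\<bar> \<le> M + M" if "s \<in> {0..r}" "y \<in> \<Omega>" for s y
      using bdd[of s y] that \<open>0 \<le> R\<close> by fastforce
  qed (use K(1) assms(10) solution_history[OF sol1] solution_history[OF sol2] in auto)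
  obtain C where "\<And>l E z. l \<in> {0..r} \<Longrightarrow> z \<in> \<Omega> \<Longrightarrow> 0 \<le> E \<Longrightarrow> \<forall>s\<le>l. \<forall>y\<in>\<Omega>. \<bar>A1 s y - A2 s y\<bar> \<le> E \<Longrightarrow>
       \<bar>\<tau>1 l z - \<tau>2 l z\<bar> \<le> C * E"
    by (rule delay_difference_bound[OF assms(1,4) sol1 sol2]) blast
  then have "\<forall>t\<in>{0..r}. \<forall>x\<in>\<Omega>. \<tau>1 t x = \<tau>2 t x"
    using A_eq by fastforce
  with A_eq show ?thesis ..
qed

end
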